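(* Let $S$ be an abundant semigroup with a quasi-ideal adequate transversal $S^0$, let $R=\{x\in S:e_x=e_{\bar x}\}$, $L=\{x\in S:f_x=f_{\bar x}\}$ and $T=\{(x,a)\in L\times R:\bar x=\bar a\}$, equipped with the multiplication $(x,a)(y,b)=(e_xay,\,ayf_b)$ (products computed in $S$; this multiplication is well defined, i.e. its values lie in $T$). Then $T$ is an abundant semigroup and $T\cong S$.
   Context: For a semigroup $S$, $\mathcal{R}^\ast=\{(a,b): \text{for all } x,y\in S^1,\ xa=ya \iff xb=yb\}$ and $\mathcal{L}^\ast$ dually. $S$ is abundant if every $\mathcal{R}^\ast$-class and $\mathcal{L}^\ast$-class contains an idempotent; adequate if abundant with commuting idempotents. In an adequate semigroup $a^+,a^\ast$ are the unique idempotents $\mathcal{R}^\ast$-, resp. $\mathcal{L}^\ast$-related to $a$. A subsemigroup $U$ of abundant $S$ is a $\ast$-subsemigroup if $U$ is abundant and $\mathcal{L}^\ast_U=\mathcal{L}^\ast_S\cap(U\times U)$, $\mathcal{R}^\ast_U=\mathcal{R}^\ast_S\cap(U\times U)$. An adequate $\ast$-subsemigroup $S^0$ of abundant $S$ is an adequate transversal if for each $x\in S$ there is a unique $\bar x\in S^0$ and idempotents $e,f$ of $S$ with $x=e\bar xf$, $e\,\mathcal{L}\,\bar x^+$, $f\,\mathcal{R}\,\bar x^\ast$; these $e,f$ are unique and denoted $e_x,f_x$. It is a quasi-ideal adequate transversal if moreover $S^0SS^0\subseteq S^0$. *)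

theory Defs
  imports Main
begin

definition semigroup_on :: "'a set \<Rightarrow> ('a \<Rightarrow> 'a \<Rightarrow> 'a) \<Rightarrow> bool" where
  "semigroup_on S m \<longleftrightarrow> (\<forall>a\<in>S. \<forall>b\<in>S. m a b \<in> S) \<and>
     (\<forall>a\<in>S. \<forall>b\<in>S. \<forall>c\<in>S. m (m a b) c = m a (m b c))"

definition idems :: "'a set \<Rightarrow> ('a \<Rightarrow> 'a \<Rightarrow> 'a) \<Rightarrow> 'a set" where
  "idems S m = {e \<in> S. m e e = e}"

text \<open>R-star: for all x,y in S^1, xa = ya iff xb = yb (the cases involving the
  adjoined identity are written out explicitly).\<close>
definition Rstar :: "'a set \<Rightarrow> ('a \<Rightarrow> 'a \<Rightarrow> 'a) \<Rightarrow> ('a \<times> 'a) set" where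
  "Rstar S m = {(a, b). a \<in> S \<and> b \<in> S \<and>
     (\<forall>x\<in>S. \<forall>y\<in>S. m x a = m y a \<longleftrightarrow> m x b = m y b) \<and>
     (\<forall>x\<in>S. m x a = a \<longleftrightarrow> m x b = b)}"

definition Lstar :: "'a set \<Rightarrow> ('a \<Rightarrow> 'a \<Rightarrow> 'a) \<Rightarrow> ('a \<times> 'a) set" where
  "Lstar S m = {(a, b). a \<in> S \<and> b \<in> S \<and>
     (\<forall>x\<in>S. \<forall>y\<in>S. m a x = m a y \<longleftrightarrow> m b x = m b y) \<and>
     (\<forall>x\<in>S. m a x = a \<longleftrightarrow> m b x = b)}"

text \<open>Green's relations: a L b iff S^1 a = S^1 b; a R b iff a S^1 = b S^1.\<close>
definition GreenL :: "'a set \<Rightarrow> ('a \<Rightarrow> 'a \<Rightarrow> 'a) \<Rightarrow> ('a \<times> 'a) set" where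
  "GreenL S m = {(a, b). a \<in> S \<and> b \<in> S \<and>
     (a = b \<or> (\<exists>s\<in>S. a = m s b)) \<and> (b = a \<or> (\<exists>t\<in>S. b = m t a))}"

definition GreenR :: "'a set \<Rightarrow> ('a \<Rightarrow> 'a \<Rightarrow> 'a) \<Rightarrow> ('a \<times> 'a) set" where
  "GreenR S m = {(a, b). a \<in> S \<and> b \<in> S \<and>
     (a = b \<or> (\<exists>s\<in>S. a = m b s)) \<and> (b = a \<or> (\<exists>t\<in>S. b = m a t))}"

definition abundant :: "'a set \<Rightarrow> ('a \<Rightarrow> 'a \<Rightarrow> 'a) \<Rightarrow> bool" where
  "abundant S m \<longleftrightarrow> semigroup_on S m \<and>
     (\<forall>a\<in>S. \<exists>e\<in>idems S m. (a, e) \<in> Rstar S m) \<and>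
     (\<forall>a\<in>S. \<exists>e\<in>idems S m. (a, e) \<in> Lstar S m)"

definition adequate :: "'a set \<Rightarrow> ('a \<Rightarrow> 'a \<Rightarrow> 'a) \<Rightarrow> bool" where
  "adequate S m \<longleftrightarrow> abundant S m \<and>
     (\<forall>e\<in>idems S m. \<forall>f\<in>idems S m. m e f = m f e)"

definition aplus :: "'a set \<Rightarrow> ('a \<Rightarrow> 'a \<Rightarrow> 'a) \<Rightarrow> 'a \<Rightarrow> 'a" where
  "aplus U m a = (THE e. e \<in> idems U m \<and> (a, e) \<in> Rstar U m)"

definition astar :: "'a set \<Rightarrow> ('a \<Rightarrow> 'a \<Rightarrow> 'a) \<Rightarrow> 'a \<Rightarrow> 'a" where
  "astar U m a = (THE e. e \<in> idems U m \<and> (a, e) \<in> Lstar U m)"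

definition star_subsemigroup :: "'a set \<Rightarrow> 'a set \<Rightarrow> ('a \<Rightarrow> 'a \<Rightarrow> 'a) \<Rightarrow> bool" where
  "star_subsemigroup U S m \<longleftrightarrow> U \<subseteq> S \<and> abundant U m \<and>
     Lstar U m = Lstar S m \<inter> (U \<times> U) \<and> Rstar U m = Rstar S m \<inter> (U \<times> U)"

definition transversal_decomp :: "'a set \<Rightarrow> 'a set \<Rightarrow> ('a \<Rightarrow> 'a \<Rightarrow> 'a) \<Rightarrow> 'a \<Rightarrow> 'a \<Rightarrow> 'a \<Rightarrow> 'a \<Rightarrow> bool" where
  "transversal_decomp S0 S m x xb e f \<longleftrightarrow> xb \<in> S0 \<and> e \<in> idems S m \<and> f \<in> idems S m \<and>
     x = m (m e xb) f \<and> (e, aplus S0 m xb) \<in> GreenL S m \<and> (f, astar S0 m xb) \<in> GreenR S m"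

definition adequate_transversal :: "'a set \<Rightarrow> 'a set \<Rightarrow> ('a \<Rightarrow> 'a \<Rightarrow> 'a) \<Rightarrow> bool" where
  "adequate_transversal S0 S m \<longleftrightarrow> abundant S m \<and> adequate S0 m \<and> star_subsemigroup S0 S m \<and>
     (\<forall>x\<in>S. \<exists>!xb. \<exists>e f. transversal_decomp S0 S m x xb e f)"

definition quasi_ideal_adequate_transversal :: "'a set \<Rightarrow> 'a set \<Rightarrow> ('a \<Rightarrow> 'a \<Rightarrow> 'a) \<Rightarrow> bool" where
  "quasi_ideal_adequate_transversal S0 S m \<longleftrightarrow> adequate_transversal S0 S m \<and>
     (\<forall>a\<in>S0. \<forall>s\<in>S. \<forall>b\<in>S0. m (m a s) b \<in> S0)"

definition tbar :: "'a set \<Rightarrow> 'a set \<Rightarrow> ('a \<Rightarrow> 'a \<Rightarrow> 'a) \<Rightarrow> 'a \<Rightarrow> 'a" where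
  "tbar S0 S m x = (THE xb. \<exists>e f. transversal_decomp S0 S m x xb e f)"

definition te :: "'a set \<Rightarrow> 'a set \<Rightarrow> ('a \<Rightarrow> 'a \<Rightarrow> 'a) \<Rightarrow> 'a \<Rightarrow> 'a" where
  "te S0 S m x = (THE e. \<exists>f. transversal_decomp S0 S m x (tbar S0 S m x) e f)"

definition tf :: "'a set \<Rightarrow> 'a set \<Rightarrow> ('a \<Rightarrow> 'a \<Rightarrow> 'a) \<Rightarrow> 'a \<Rightarrow> 'a" where
  "tf S0 S m x = (THE f. \<exists>e. transversal_decomp S0 S m x (tbar S0 S m x) e f)"

definition Rset :: "'a set \<Rightarrow> 'a set \<Rightarrow> ('a \<Rightarrow> 'a \<Rightarrow> 'a) \<Rightarrow> 'a set" where
  "Rset S0 S m = {x \<in> S. te S0 S m x = te S0 S m (tbar S0 S m x)}"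

definition Lset :: "'a set \<Rightarrow> 'a set \<Rightarrow> ('a \<Rightarrow> 'a \<Rightarrow> 'a) \<Rightarrow> 'a set" where
  "Lset S0 S m = {x \<in> S. tf S0 S m x = tf S0 S m (tbar S0 S m x)}"

definition Tset :: "'a set \<Rightarrow> 'a set \<Rightarrow> ('a \<Rightarrow> 'a \<Rightarrow> 'a) \<Rightarrow> ('a \<times> 'a) set" where
  "Tset S0 S m = {(x, a). x \<in> Lset S0 S m \<and> a \<in> Rset S0 S m \<and> tbar S0 S m x = tbar S0 S m a}"

definition Tmult :: "'a set \<Rightarrow> 'a set \<Rightarrow> ('a \<Rightarrow> 'a \<Rightarrow> 'a) \<Rightarrow> ('a \<times> 'a) \<Rightarrow> ('a \<times> 'a) \<Rightarrow> ('a \<times> 'a)" where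
  "Tmult S0 S m p q = (case p of (x, a) \<Rightarrow> case q of (y, b) \<Rightarrow>
     (m (m (te S0 S m x) a) y, m (m a y) (tf S0 S m b)))"

end

theory Submission
  imports Defs
begin

text \<open>The elements of L are exactly
  those with f_x = (bar x)^*, i.e. of the form e (bar x), and dually R consists of the
  (bar a) f; hence (x, a) \<mapsto> e_x a = e_x (bar x) f_a is a bijection from T onto S, with inverse
  s \<mapsto> (e_s (bar s), (bar s) f_s). For a product, z = a y lies in S0 because S0 is a
  quasi-ideal, and z^+ \<le> (bar x)^+ \<le> e_x in the adequate S0 makes e_x z an element of L with
  transversal part z (dually z f_b lies in R). So T is closed under its multiplication, the
  bijection is multiplicative, and abundance is transported from S.\<close>

lemma Lstar_conv_Rstar: "Lstar S m = Rstar S (\<lambda>a b. m b a)"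
  by (simp add: Lstar_def Rstar_def)

lemma GreenR_conv_GreenL: "GreenR S m = GreenL S (\<lambda>a b. m b a)"
  by (simp add: GreenR_def GreenL_def)

text \<open>The lemmas relating an operation to its opposite loop as unrestricted simp rules
  (the pattern \<open>\<lambda>a b. ?m b a\<close> matches every binary operation), hence the explicit
  instantiations below.\<close>

lemma idems_flip: "idems S (\<lambda>a b. m b a) = idems S m"
  by (simp add: idems_def)

lemma semigroup_on_flip: "semigroup_on S (\<lambda>a b. m b a) \<longleftrightarrow> semigroup_on S m"
  unfolding semigroup_on_def by (intro conj_cong; fastforce)

lemma abundant_flip: "abundant S (\<lambda>a b. m b a) \<longleftrightarrow> abundant S m"
proof -
  have "Rstar S (\<lambda>a b. m b a) = Lstar S m" and "Lstar S (\<lambda>a b. m b a) = Rstar S m"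
    by (simp_all add: Lstar_conv_Rstar)
  then show ?thesis
    unfolding abundant_def semigroup_on_flip[of S m] idems_flip[of S m] by blast
qed

lemma adequate_flip: "adequate S (\<lambda>a b. m b a) \<longleftrightarrow> adequate S m"
  by (simp add: adequate_def abundant_flip[of S m] idems_flip[of S m]) blast

lemma astar_conv_aplus: "astar U m = aplus U (\<lambda>a b. m b a)"
  by (simp add: fun_eq_iff astar_def aplus_def Lstar_conv_Rstar idems_flip[of U m])

lemma GreenL_idems_iff:
  assumes sg: "semigroup_on S m" and e: "e \<in> idems S m" and g: "g \<in> idems S m"
  shows "(e, g) \<in> GreenL S m \<longleftrightarrow> m e g = e \<and> m g e = g"
proof -
  have absorb: "m a b = a" if "b \<in> idems S m" "a = b \<or> (\<exists>s\<in>S. a = m s b)" for a b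
    using that sg by (auto simp: idems_def semigroup_on_def)
  show ?thesis
    using absorb[OF g, of e] absorb[OF e, of g] e g by (force simp: GreenL_def idems_def)
qed

lemma GreenR_idems_iff:
  assumes "semigroup_on S m" and "e \<in> idems S m" and "g \<in> idems S m"
  shows "(e, g) \<in> GreenR S m \<longleftrightarrow> m g e = e \<and> m e g = g"
  using GreenL_idems_iff[of S "\<lambda>a b. m b a" e g] assms
  by (simp add: GreenR_conv_GreenL semigroup_on_flip[of S m] idems_flip[of S m])

lemma aplus_idems_Rstar:
  assumes "adequate U m" and "a \<in> U"
  shows "aplus U m a \<in> idems U m \<and> (a, aplus U m a) \<in> Rstar U m"
proof -
  obtain e where e: "e \<in> idems U m" "(a, e) \<in> Rstar U m"
    using assms by (auto simp: adequate_def abundant_def)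
  have "e' = e" if e': "e' \<in> idems U m" "(a, e') \<in> Rstar U m" for e'
  proof -
    have "m e e' = e'" and "m e' e = e"
      using e e' by (auto simp: Rstar_def idems_def)
    then show ?thesis
      using assms e e' by (metis adequate_def)
  qed
  then have "aplus U m a = e"
    unfolding aplus_def using e by blast
  with e show ?thesis by simp
qed

lemma astar_idems_Lstar:
  assumes "adequate U m" and "a \<in> U"
  shows "astar U m a \<in> idems U m \<and> (a, astar U m a) \<in> Lstar U m"
  using aplus_idems_Rstar[of U "\<lambda>a b. m b a" a] assms
  by (simp add: adequate_flip[of U m] astar_conv_aplus idems_flip[of U m] Lstar_conv_Rstar)

locale mult_iso =
  fixes \<phi> :: "'b \<Rightarrow> 'a" and T :: "'b set" and mT :: "'b \<Rightarrow> 'b \<Rightarrow> 'b"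
    and S :: "'a set" and m :: "'a \<Rightarrow> 'a \<Rightarrow> 'a"
  assumes bij: "bij_betw \<phi> T S"
    and closed: "\<And>p q. p \<in> T \<Longrightarrow> q \<in> T \<Longrightarrow> mT p q \<in> T"
    and hom: "\<And>p q. p \<in> T \<Longrightarrow> q \<in> T \<Longrightarrow> \<phi> (mT p q) = m (\<phi> p) (\<phi> q)"
begin

lemma ball_iff: "(\<forall>s\<in>S. P s) \<longleftrightarrow> (\<forall>p\<in>T. P (\<phi> p))"
  using bij by (auto simp: bij_betw_def)

lemma eq_iff: "p \<in> T \<Longrightarrow> q \<in> T \<Longrightarrow> \<phi> p = \<phi> q \<longleftrightarrow> p = q"
  using bij by (auto simp: bij_betw_def inj_on_eq_iff)

lemma mult_eq_iff:
  assumes "p \<in> T" "q \<in> T" "r \<in> T"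
  shows "mT p q = r \<longleftrightarrow> m (\<phi> p) (\<phi> q) = \<phi> r"
  using assms eq_iff closed hom by metis

lemma mult_eq_mult_iff:
  assumes "p \<in> T" "q \<in> T" "r \<in> T" "s \<in> T"
  shows "mT p q = mT r s \<longleftrightarrow> m (\<phi> p) (\<phi> q) = m (\<phi> r) (\<phi> s)"
  using assms eq_iff closed hom by metis

lemma semigroup_on: "semigroup_on S m \<Longrightarrow> semigroup_on T mT"
  unfolding semigroup_on_def ball_iff by (auto simp: closed mult_eq_mult_iff hom)

lemma idems_iff: "p \<in> T \<Longrightarrow> p \<in> idems T mT \<longleftrightarrow> \<phi> p \<in> idems S m"
  using bij by (auto simp: idems_def mult_eq_iff bij_betw_def)

lemma Rstar_iff:
  "p \<in> T \<Longrightarrow> q \<in> T \<Longrightarrow> (p, q) \<in> Rstar T mT \<longleftrightarrow> (\<phi> p, \<phi> q) \<in> Rstar S m"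
  using bij unfolding Rstar_def ball_iff by (auto simp: mult_eq_iff mult_eq_mult_iff bij_betw_def)

lemma flip: "mult_iso \<phi> T (\<lambda>p q. mT q p) S (\<lambda>a b. m b a)"
  by unfold_locales (simp_all add: bij closed hom)

lemma Lstar_iff:
  "p \<in> T \<Longrightarrow> q \<in> T \<Longrightarrow> (p, q) \<in> Lstar T mT \<longleftrightarrow> (\<phi> p, \<phi> q) \<in> Lstar S m"
  using mult_iso.Rstar_iff[OF flip] by (simp add: Lstar_conv_Rstar)

lemma bex_idems_iff: "(\<exists>e\<in>idems S m. P e) \<longleftrightarrow> (\<exists>e\<in>idems T mT. P (\<phi> e))"
proof -
  have "idems S m = \<phi> ` idems T mT"
    using bij idems_iff by (auto simp: bij_betw_def idems_def image_iff)
  then show ?thesis by simp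
qed

lemma abundant: "abundant S m \<Longrightarrow> abundant T mT"
  unfolding abundant_def ball_iff bex_idems_iff
  using semigroup_on by (auto simp: idems_def Rstar_iff Lstar_iff)

end

locale qi_transversal =
  fixes S S0 :: "'a set" and m :: "'a \<Rightarrow> 'a \<Rightarrow> 'a" (infixl "\<cdot>" 70)
  assumes abundant_S: "abundant S m"
    and transversal: "quasi_ideal_adequate_transversal S0 S m"
begin

abbreviation ap :: "'a \<Rightarrow> 'a" where "ap a \<equiv> aplus S0 m a"
abbreviation ast :: "'a \<Rightarrow> 'a" where "ast a \<equiv> astar S0 m a"
abbreviation decomp where "decomp \<equiv> transversal_decomp S0 S m"
abbreviation bar where "bar \<equiv> tbar S0 S m"
abbreviation e_of where "e_of \<equiv> te S0 S m"
abbreviation f_of where "f_of \<equiv> tf S0 S m"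

lemma semigroup_S: "semigroup_on S m"
  using abundant_S by (simp add: abundant_def)

lemma mult_closed [simp]: "a \<in> S \<Longrightarrow> b \<in> S \<Longrightarrow> a \<cdot> b \<in> S"
  using semigroup_S by (simp add: semigroup_on_def)

lemma assoc: "a \<in> S \<Longrightarrow> b \<in> S \<Longrightarrow> c \<in> S \<Longrightarrow> a \<cdot> b \<cdot> c = a \<cdot> (b \<cdot> c)"
  using semigroup_S by (simp add: semigroup_on_def)

lemma assoc_eq: "a \<cdot> b = c \<Longrightarrow> a \<in> S \<Longrightarrow> b \<in> S \<Longrightarrow> x \<in> S \<Longrightarrow> a \<cdot> (b \<cdot> x) = c \<cdot> x"
  by (metis assoc)

lemma adequate_transversal: "adequate_transversal S0 S m"
  using transversal by (simp add: quasi_ideal_adequate_transversal_def)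

lemma adequate_S0: "adequate S0 m"
  using adequate_transversal by (simp add: adequate_transversal_def)

lemma star_subsemigroup_S0: "star_subsemigroup S0 S m"
  using adequate_transversal by (simp add: adequate_transversal_def)

lemma S0_in_S [simp]: "a \<in> S0 \<Longrightarrow> a \<in> S"
  using star_subsemigroup_S0 by (auto simp: star_subsemigroup_def)

lemma quasi_ideal: "a \<in> S0 \<Longrightarrow> s \<in> S \<Longrightarrow> b \<in> S0 \<Longrightarrow> a \<cdot> s \<cdot> b \<in> S0"
  using transversal by (simp add: quasi_ideal_adequate_transversal_def)

lemma ex1_decomp: "x \<in> S \<Longrightarrow> \<exists>!w. \<exists>e f. decomp x w e f"
  using adequate_transversal by (simp add: adequate_transversal_def)

lemma idems_S0_commute: "e \<in> idems S0 m \<Longrightarrow> f \<in> idems S0 m \<Longrightarrow> e \<cdot> f = f \<cdot> e"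
  using adequate_S0 by (simp add: adequate_def)

lemma ap_idems_Rstar: "a \<in> S0 \<Longrightarrow> ap a \<in> idems S0 m \<and> (a, ap a) \<in> Rstar S m"
  using aplus_idems_Rstar[OF adequate_S0] star_subsemigroup_S0
  by (auto simp: star_subsemigroup_def idems_def)

lemma ast_idems_Lstar: "a \<in> S0 \<Longrightarrow> ast a \<in> idems S0 m \<and> (a, ast a) \<in> Lstar S m"
  using astar_idems_Lstar[OF adequate_S0] star_subsemigroup_S0
  by (auto simp: star_subsemigroup_def idems_def)

lemma ap_in_S0 [simp]: "a \<in> S0 \<Longrightarrow> ap a \<in> S0"
  and ap_idem [simp]: "a \<in> S0 \<Longrightarrow> ap a \<cdot> ap a = ap a"
  and ap_mult [simp]: "a \<in> S0 \<Longrightarrow> ap a \<cdot> a = a"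
  and mult_cancel_ap: "a \<in> S0 \<Longrightarrow> x \<in> S \<Longrightarrow> y \<in> S \<Longrightarrow> x \<cdot> a = y \<cdot> a \<longleftrightarrow> x \<cdot> ap a = y \<cdot> ap a"
  using ap_idems_Rstar[of a] by (auto simp: idems_def Rstar_def)

lemma ast_in_S0 [simp]: "a \<in> S0 \<Longrightarrow> ast a \<in> S0"
  and ast_idem [simp]: "a \<in> S0 \<Longrightarrow> ast a \<cdot> ast a = ast a"
  and mult_ast [simp]: "a \<in> S0 \<Longrightarrow> a \<cdot> ast a = a"
  and mult_cancel_ast: "a \<in> S0 \<Longrightarrow> x \<in> S \<Longrightarrow> y \<in> S \<Longrightarrow> a \<cdot> x = a \<cdot> y \<longleftrightarrow> ast a \<cdot> x = ast a \<cdot> y"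
  using ast_idems_Lstar[of a] by (auto simp: idems_def Lstar_def)

lemma ap_below: 
  assumes "a \<in> S0" "e \<in> idems S0 m" "e \<cdot> a = a"
  shows "ap a \<cdot> e = ap a"
proof -
  have "e \<cdot> ap a = ap a \<cdot> ap a"
    using assms mult_cancel_ap[of a e "ap a"] by (simp add: idems_def)
  then show ?thesis
    using assms idems_S0_commute ap_idems_Rstar by simp
qed

lemma ast_below: 
  assumes "a \<in> S0" "e \<in> idems S0 m" "a \<cdot> e = a"
  shows "e \<cdot> ast a = ast a"
proof -
  have "ast a \<cdot> e = ast a \<cdot> ast a"
    using assms mult_cancel_ast[of a e "ast a"] by (simp add: idems_def)
  then show ?thesis
    using assms idems_S0_commute ast_idems_Lstar by simp
qed

lemma ap_below_trans:
  assumes "w \<in> S0" "z \<in> S0" "ap w \<cdot> z = z" "e \<in> S" "ap w \<cdot> e = ap w"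
  shows "ap z \<cdot> e = ap z"
proof -
  have "ap z \<cdot> ap w = ap z"
    using assms ap_below[of z "ap w"] ap_idems_Rstar by simp
  then show ?thesis
    using assms by (metis assoc_eq ap_in_S0 S0_in_S)
qed

lemma ast_below_trans:
  assumes "v \<in> S0" "z \<in> S0" "z \<cdot> ast v = z" "f \<in> S" "f \<cdot> ast v = ast v"
  shows "f \<cdot> ast z = ast z"
proof -
  have "ast v \<cdot> ast z = ast z"
    using assms ast_below[of z "ast v"] ast_idems_Lstar by simp
  then show ?thesis
    using assms by (metis assoc_eq ast_in_S0 S0_in_S)
qed

lemma decomp_iff:
  "decomp x w e f \<longleftrightarrow> w \<in> S0 \<and> e \<in> S \<and> f \<in> S \<and> e \<cdot> e = e \<and> f \<cdot> f = f \<and> x = e \<cdot> w \<cdot> f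
     \<and> e \<cdot> ap w = e \<and> ap w \<cdot> e = ap w \<and> ast w \<cdot> f = f \<and> f \<cdot> ast w = ast w"
proof -
  have "w \<in> S0 \<Longrightarrow> ap w \<in> idems S m" "w \<in> S0 \<Longrightarrow> ast w \<in> idems S m"
    by (simp_all add: idems_def)
  then show ?thesis
    unfolding transversal_decomp_def
    using GreenL_idems_iff[OF semigroup_S, of e "ap w"] GreenR_idems_iff[OF semigroup_S, of f "ast w"]
    by (auto simp: idems_def)
qed

lemma decomp_ap_mult:
  assumes "decomp x w e f" shows "ap w \<cdot> x = w \<cdot> f"
  using assms by (auto simp: decomp_iff assoc[symmetric])

lemma decomp_mult_ast:
  assumes "decomp x w e f" shows "x \<cdot> ast w = e \<cdot> w"
  using assms by (auto simp: decomp_iff assoc)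

lemma decomp_idems_unique:
  assumes d: "decomp x w e f" and d': "decomp x w e' f'"
  shows "e = e' \<and> f = f'"
proof -
  have w: "w \<in> S0" using d by (simp add: decomp_iff)
  have "w \<cdot> f = w \<cdot> f'"
    using decomp_ap_mult[OF d] decomp_ap_mult[OF d'] by simp
  then have "ast w \<cdot> f = ast w \<cdot> f'"
    using d d' w mult_cancel_ast by (simp add: decomp_iff)
  moreover have "e \<cdot> w = e' \<cdot> w"
    using decomp_mult_ast[OF d] decomp_mult_ast[OF d'] by simp
  then have "e \<cdot> ap w = e' \<cdot> ap w"
    using d d' w mult_cancel_ap by (simp add: decomp_iff)
  ultimately show ?thesis
    using d d' by (simp add: decomp_iff)
qed

lemma decomp_the:
  assumes x: "x \<in> S" and d: "decomp x w e f"
  shows "bar x = w" and "e_of x = e" and "f_of x = f"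
proof -
  show bar: "bar x = w"
    unfolding tbar_def using ex1_decomp[OF x] d by (intro the1_equality) blast+
  show "e_of x = e"
    unfolding te_def bar using d decomp_idems_unique by (intro the_equality) blast+
  show "f_of x = f"
    unfolding tf_def bar using d decomp_idems_unique by (intro the_equality) blast+
qed

lemma decomp_bar: "x \<in> S \<Longrightarrow> decomp x (bar x) (e_of x) (f_of x)"
  using ex1_decomp decomp_the by metis

lemma bar_in_S0 [simp]: "x \<in> S \<Longrightarrow> bar x \<in> S0"
  using decomp_bar by (simp add: decomp_iff)

lemma decomp_left_mult:
  assumes "z \<in> S0" "e \<in> S" "e \<cdot> e = e" "ap z \<cdot> e = ap z"
  shows "decomp (e \<cdot> z) z (e \<cdot> ap z) (ast z)"
  using assms by (simp add: decomp_iff assoc assoc_eq[OF assms(4)])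

lemma decomp_right_mult:
  assumes "z \<in> S0" "f \<in> S" "f \<cdot> f = f" "f \<cdot> ast z = ast z"
  shows "decomp (z \<cdot> f) z (ap z) (ast z \<cdot> f)"
  using assms by (simp add: decomp_iff assoc assoc_eq[OF assms(4)] assoc_eq[OF mult_ast[OF assms(1)]]
    assoc_eq[OF ast_idem])

lemma decomp_S0: "w \<in> S0 \<Longrightarrow> bar w = w \<and> e_of w = ap w \<and> f_of w = ast w"
  using decomp_left_mult[of w "ap w"] decomp_the[of w w "ap w" "ast w"] by simp

lemma Lset_iff: "x \<in> Lset S0 S m \<longleftrightarrow> x \<in> S \<and> f_of x = ast (bar x)"
  by (auto simp: Lset_def decomp_S0)

lemma Rset_iff: "a \<in> Rset S0 S m \<longleftrightarrow> a \<in> S \<and> e_of a = ap (bar a)"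
  by (auto simp: Rset_def decomp_S0)

lemma Lset_eq: "x \<in> Lset S0 S m \<Longrightarrow> e_of x \<cdot> bar x = x"
  using decomp_bar[of x] by (auto simp: Lset_iff decomp_iff assoc)

lemma Rset_eq: "a \<in> Rset S0 S m \<Longrightarrow> bar a \<cdot> f_of a = a"
  using decomp_bar[of a] by (auto simp: Rset_iff decomp_iff assoc[symmetric])

lemma left_mult_in_Lset:
  assumes "z \<in> S0" "e \<in> S" "e \<cdot> e = e" "ap z \<cdot> e = ap z"
  shows "e \<cdot> z \<in> Lset S0 S m \<and> bar (e \<cdot> z) = z \<and> e_of (e \<cdot> z) = e \<cdot> ap z"
  using decomp_the[OF _ decomp_left_mult[OF assms]] assms by (simp add: Lset_iff)

lemma right_mult_in_Rset:
  assumes "z \<in> S0" "f \<in> S" "f \<cdot> f = f" "f \<cdot> ast z = ast z"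
  shows "z \<cdot> f \<in> Rset S0 S m \<and> bar (z \<cdot> f) = z \<and> f_of (z \<cdot> f) = ast z \<cdot> f"
  using decomp_the[OF _ decomp_right_mult[OF assms]] assms by (simp add: Rset_iff)

definition \<phi> :: "'a \<times> 'a \<Rightarrow> 'a" where
  "\<phi> p = e_of (fst p) \<cdot> snd p"

lemma decomp_\<phi>:
  assumes "(x, a) \<in> Tset S0 S m"
  shows "decomp (\<phi> (x, a)) (bar x) (e_of x) (f_of a)"
proof -
  have x: "x \<in> Lset S0 S m" and a: "a \<in> Rset S0 S m" and bar: "bar a = bar x"
    using assms by (auto simp: Tset_def)
  have "decomp x (bar x) (e_of x) (f_of x)" and "decomp a (bar x) (e_of a) (f_of a)"
    using decomp_bar[of x] decomp_bar[of a] x a bar by (simp_all add: Lset_iff Rset_iff)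
  moreover have "\<phi> (x, a) = e_of x \<cdot> bar x \<cdot> f_of a"
    using Rset_eq[OF a] calculation bar by (auto simp: \<phi>_def decomp_iff assoc)
  ultimately show ?thesis
    by (simp add: decomp_iff)
qed

lemma bij_\<phi>: "bij_betw \<phi> (Tset S0 S m) S"
proof (rule bij_betwI')
  fix p q assume p: "p \<in> Tset S0 S m" and q: "q \<in> Tset S0 S m"
  obtain x a y b where pq: "p = (x, a)" "q = (y, b)" by fastforce
  have "\<phi> p \<in> S"
    using decomp_\<phi> p pq by (auto simp: decomp_iff)
  then have "\<phi> p = \<phi> q \<Longrightarrow> bar x = bar y \<and> e_of x = e_of y \<and> f_of a = f_of b"
    using decomp_the decomp_\<phi> p q pq by metis
  then show "\<phi> p = \<phi> q \<longleftrightarrow> p = q"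
    using Lset_eq Rset_eq p q pq by (auto simp: Tset_def) metis+
next
  fix p assume "p \<in> Tset S0 S m"
  then show "\<phi> p \<in> S"
    using decomp_\<phi>[of "fst p" "snd p"] by (simp add: decomp_iff)
next
  fix s assume s: "s \<in> S"
  define w e f where "w = bar s" "e = e_of s" "f = f_of s"
  have d: "decomp s w e f"
    using decomp_bar[OF s] by (simp add: w_e_f_def)
  then have x: "e \<cdot> w \<in> Lset S0 S m \<and> bar (e \<cdot> w) = w \<and> e_of (e \<cdot> w) = e"
    and a: "w \<cdot> f \<in> Rset S0 S m \<and> bar (w \<cdot> f) = w"
    using left_mult_in_Lset[of w e] right_mult_in_Rset[of w f] by (simp_all add: decomp_iff)
  then have "(e \<cdot> w, w \<cdot> f) \<in> Tset S0 S m"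
    by (simp add: Tset_def)
  moreover have "s = \<phi> (e \<cdot> w, w \<cdot> f)"
    using d x by (auto simp: \<phi>_def decomp_iff assoc)
  ultimately show "\<exists>p\<in>Tset S0 S m. s = \<phi> p" by blast
qed

lemma Tmult_in_Tset_and_\<phi>_hom:
  assumes p: "(x, a) \<in> Tset S0 S m" and q: "(y, b) \<in> Tset S0 S m"
  shows "Tmult S0 S m (x, a) (y, b) \<in> Tset S0 S m
    \<and> \<phi> (Tmult S0 S m (x, a) (y, b)) = \<phi> (x, a) \<cdot> \<phi> (y, b)"
proof -
  define w v e1 f1 e2 f2 where "w = bar x" and "v = bar y"
    and "e1 = e_of x" and "f1 = f_of a" and "e2 = e_of y" and "f2 = f_of b"
  note defs = w_def v_def e1_def f1_def e2_def f2_def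
  have dx: "decomp (\<phi> (x, a)) w e1 f1" and dy: "decomp (\<phi> (y, b)) v e2 f2"
    using decomp_\<phi> p q by (simp_all add: defs)
  have S: "w \<in> S0" "v \<in> S0" "e1 \<in> S" "f1 \<in> S" "e2 \<in> S" "f2 \<in> S"
    using dx dy by (simp_all add: decomp_iff)
  have a: "a = w \<cdot> f1" and y: "y = e2 \<cdot> v"
    using p q Rset_eq[of a] Lset_eq[of y] by (auto simp: Tset_def defs)
  define z where "z = a \<cdot> y"
  have z_eq: "z = w \<cdot> (f1 \<cdot> e2) \<cdot> v"
    using S by (simp add: z_def a y assoc)
  have z: "z \<in> S0"
    unfolding z_eq using S by (simp add: quasi_ideal)
  txt \<open>z^+ \<le> w^+ \<le> e1 and dually f2 \<ge> v^* \<ge> z^*.\<close>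
  have "ap w \<cdot> z = z" and "z \<cdot> ast v = z"
    unfolding z_eq using S by (simp_all add: assoc[symmetric], simp add: assoc)
  then have L: "e1 \<cdot> z \<in> Lset S0 S m \<and> bar (e1 \<cdot> z) = z \<and> e_of (e1 \<cdot> z) = e1 \<cdot> ap z"
    and R: "z \<cdot> f2 \<in> Rset S0 S m \<and> bar (z \<cdot> f2) = z"
    using dx dy z S ap_below_trans[of w z e1] ast_below_trans[of v z f2]
      left_mult_in_Lset[of z e1] right_mult_in_Rset[of z f2]
    by (simp_all add: decomp_iff)
  have "a \<in> S" "y \<in> S"
    using S by (simp_all add: a y)
  then have T: "Tmult S0 S m (x, a) (y, b) = (e1 \<cdot> z, z \<cdot> f2)"
    using S by (simp add: Tmult_def z_def assoc defs[symmetric])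
  have "\<phi> (x, a) \<cdot> \<phi> (y, b) = e1 \<cdot> z \<cdot> f2"
    using dx dy S by (simp add: decomp_iff z_eq assoc)
  then show ?thesis
    using L R S z by (simp add: T Tset_def \<phi>_def assoc assoc_eq[OF ap_mult[OF z]])
qed

end

theorem lemma2p5:
  fixes S S0 :: "'a set" and m :: "'a \<Rightarrow> 'a \<Rightarrow> 'a"
  assumes "abundant S m"
    and "quasi_ideal_adequate_transversal S0 S m"
  shows "(\<forall>p\<in>Tset S0 S m. \<forall>q\<in>Tset S0 S m. Tmult S0 S m p q \<in> Tset S0 S m)
    \<and> abundant (Tset S0 S m) (Tmult S0 S m)
    \<and> (\<exists>\<phi>. bij_betw \<phi> (Tset S0 S m) S \<and>
         (\<forall>p\<in>Tset S0 S m. \<forall>q\<in>Tset S0 S m. \<phi> (Tmult S0 S m p q) = m (\<phi> p) (\<phi> q)))"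
proof -
  interpret qi_transversal S S0 m
    using assms by unfold_locales
  have closed: "\<forall>p\<in>Tset S0 S m. \<forall>q\<in>Tset S0 S m. Tmult S0 S m p q \<in> Tset S0 S m"
    and hom: "\<forall>p\<in>Tset S0 S m. \<forall>q\<in>Tset S0 S m. \<phi> (Tmult S0 S m p q) = m (\<phi> p) (\<phi> q)"
    using Tmult_in_Tset_and_\<phi>_hom by auto
  interpret T: mult_iso \<phi> "Tset S0 S m" "Tmult S0 S m" S m
    using bij_\<phi> closed hom by unfold_locales auto
  show ?thesis
    using closed hom bij_\<phi> T.abundant abundant_S by blast
qed

end
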